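(* Fix $0<\eta<1$ and constants $A_\eta,a_\eta>0$. Let $D\ge 2$, let $0<\delta\le D$, let $\kappa\in\mathbb{Z}_{\ge0}$, and put $\xi_0=\frac{2\kappa+1}{4\delta}$. Let $\Phi\in C^\infty(\mathbb{R})$ be supported in $[-D/2,D/2]$ with $\|\Phi\|_{L^2(\mathbb{R})}=1$, and assume that for all $\xi\in\mathbb{R}$ $$ |\hat\Phi(\xi)|\le \delta^{1/2}A_\eta\Big(\exp\big(-a_\eta(\delta|\xi-\xi_0|)^{1-\eta}\big)+\exp\big(-a_\eta(\delta|\xi+\xi_0|)^{1-\eta}\big)\Big). $$ Then for every $n\in\mathbb{N}$ there exist positive constants $C_n,d_n,s_n$, depending only on $n,\eta,A_\eta,a_\eta$ (and not on $D,\delta,\kappa,\Phi$), such that for all $\xi$ with $|\xi|>\xi_0$, $$ |\hat\Phi^{(n)}(\xi)|\le C_nD^{d_n}\Big(\exp\big(-s_n(\delta|\xi-\xi_0|)^{1-\eta}\big)+\exp\big(-s_n(\delta|\xi+\xi_0|)^{1-\eta}\big)\Big). $$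
   Context: The Fourier transform is $\hat \Phi(\xi)=\int_{\mathbb{R}} \Phi(x)e^{-2\pi i x\xi}\,dx$, and $\hat\Phi^{(n)}$ denotes its $n$-th derivative. *)

theory Defs
  imports "HOL-Analysis.Analysis"
begin

fun vderiv_iter :: "nat \<Rightarrow> (real \<Rightarrow> 'a::real_normed_vector) \<Rightarrow> real \<Rightarrow> 'a" where
  "vderiv_iter 0 f = f"
| "vderiv_iter (Suc n) f = (\<lambda>x. vector_derivative (vderiv_iter n f) (at x))"

definition smooth_real :: "(real \<Rightarrow> 'a::real_normed_vector) \<Rightarrow> bool" where
  "smooth_real f \<longleftrightarrow>
     (\<forall>n x. (vderiv_iter n f has_vector_derivative vderiv_iter (Suc n) f x) (at x))"

definition fourier :: "(real \<Rightarrow> complex) \<Rightarrow> real \<Rightarrow> complex" where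
  "fourier \<Phi> \<xi> = (LINT x|lborel. \<Phi> x * cis (- 2 * pi * x * \<xi>))"

end

theory Submission
  imports Defs
begin

text \<open>
  Let F be the Fourier transform of \<open>\<Phi>\<close> and \<open>E s \<xi>\<close> the sum of the two stretched
  exponentials with rate \<open>s\<close>. Since \<open>\<Phi>\<close> lives on \<open>[-D/2, D/2]\<close> and has unit \<open>L\<^sup>2\<close> norm,
  the k-th derivative of F is bounded by \<open>4^k D^(k+1)\<close> uniformly. Derivatives are then
  controlled by interpolation: if \<open>|F^(n)| \<le> K E s\<close> beyond \<open>\<xi>\<^sub>0\<close> and \<open>h = sqrt (E s \<xi>)\<close>,
  Taylor's formula between \<open>\<xi>\<close> and the point at distance \<open>h\<close> further from the origin
  (where E is smaller) bounds \<open>h |F^(n+1)(\<xi>)|\<close> by \<open>(2K + 3 sup |F^(n+2)|) h\<^sup>2\<close>;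
  and \<open>sqrt (E s \<xi>) \<le> E (s/2) \<xi>\<close>. So each derivative halves the rate and costs a
  polynomial factor in D.
\<close>

section \<open>Fourier transforms of compactly supported functions\<close>

definition fourier_moment :: "(real \<Rightarrow> complex) \<Rightarrow> real \<Rightarrow> nat \<Rightarrow> real \<Rightarrow> complex" where
  "fourier_moment \<Phi> L k \<xi> =
     integral {-L..L} (\<lambda>x. (-2*pi*\<i> * of_real x)^k * \<Phi> x * cis (-2*pi*x*\<xi>))"

lemma has_vector_derivative_cis_linear:
  "((\<lambda>\<xi>. cis (-2*pi*x*\<xi>)) has_vector_derivative (-2*pi*\<i> * of_real x) * cis (-2*pi*x*\<xi>))
     (at \<xi> within U)"
proof -
  have "((\<lambda>\<xi>. -2*pi*x*\<xi>) has_derivative (\<lambda>t. t * (-2*pi*x))) (at \<xi> within U)"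
    by (auto intro!: derivative_eq_intros)
  from has_derivative_cis[OF this] show ?thesis
    unfolding has_vector_derivative_def
    by (rule has_derivative_eq_rhs) (auto simp: fun_eq_iff scaleR_conv_of_real algebra_simps)
qed

lemma fourier_moment_has_vector_derivative:
  assumes "continuous_on UNIV \<Phi>"
  shows "(fourier_moment \<Phi> L k has_vector_derivative fourier_moment \<Phi> L (Suc k) \<xi>) (at \<xi>)"
proof -
  have "((\<lambda>\<xi>. integral (cbox (-L) L) (\<lambda>x. (-2*pi*\<i> * of_real x)^k * \<Phi> x * cis (-2*pi*x*\<xi>)))
      has_vector_derivative integral (cbox (-L) L)
        (\<lambda>x. (-2*pi*\<i> * of_real x)^k * \<Phi> x * ((-2*pi*\<i> * of_real x) * cis (-2*pi*x*\<xi>))))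
      (at \<xi> within UNIV)"
    apply (rule leibniz_rule_vector_derivative)
        apply (rule has_vector_derivative_mult_right, rule has_vector_derivative_cis_linear)
       apply (rule integrable_continuous)
       apply (intro continuous_intros continuous_on_subset[OF assms]; simp)
      apply (simp add: split_beta)
      apply (intro continuous_intros continuous_on_compose2[OF assms]; simp)
     apply auto
    done
  then show ?thesis
    unfolding fourier_moment_def cbox_interval by (simp add: algebra_simps)
qed

lemma vderiv_iter_fourier_moment:
  assumes "continuous_on UNIV \<Phi>"
  shows "vderiv_iter n (fourier_moment \<Phi> L 0) = fourier_moment \<Phi> L n"
proof (induction n)
  case (Suc n)
  show ?case
    using vector_derivative_at[OF fourier_moment_has_vector_derivative[OF assms]]
    by (simp add: Suc fun_eq_iff)
qed simp

lemma integral_lborel_eq_integral_interval: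
  fixes f :: "real \<Rightarrow> 'b::euclidean_space"
  assumes "continuous_on UNIV f" "\<And>x. \<bar>x\<bar> > L \<Longrightarrow> f x = 0"
  shows "(LINT x|lborel. f x) = integral {-L..L} f"
proof -
  have "(LINT x|lborel. f x) = (LINT x|lborel. indicator {-L..L} x *\<^sub>R f x)"
    by (rule Bochner_Integration.integral_cong) (auto simp: indicator_def assms(2))
  also have "\<dots> = (LINT x:{-L..L}|lborel. f x)"
    by (simp add: set_lebesgue_integral_def)
  also have "\<dots> = integral {-L..L} f"
    apply (rule set_borel_integral_eq_integral(2))
    unfolding set_integrable_def
    by (rule borel_integrable_compact) (auto intro: continuous_on_subset[OF assms(1)])
  finally show ?thesis .
qed

lemma fourier_eq_fourier_moment:
  assumes "continuous_on UNIV \<Phi>" "\<And>x. \<bar>x\<bar> > L \<Longrightarrow> \<Phi> x = 0"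
  shows "fourier \<Phi> = fourier_moment \<Phi> L 0"
  unfolding fourier_def fourier_moment_def fun_eq_iff
  by (subst integral_lborel_eq_integral_interval[where L = L])
     (auto intro!: continuous_intros continuous_on_compose2[OF assms(1)] simp: assms(2))

text \<open>The \<open>L\<^sup>2\<close> normalisation enters through \<open>|\<Phi>| \<le> (1 + |\<Phi>|\<^sup>2)/2\<close>.\<close>

lemma norm_fourier_moment_le:
  assumes "continuous_on {-L..L} \<Phi>" "integral {-L..L} (\<lambda>x. (cmod (\<Phi> x))\<^sup>2) = 1" "L \<ge> 0"
  shows "norm (fourier_moment \<Phi> L k \<xi>) \<le> (2*pi*L)^k * ((2*L + 1)/2)"
proof -
  let ?bound = "\<lambda>x. (2*pi*L)^k * ((1 + (cmod (\<Phi> x))\<^sup>2)/2)"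
  have "norm (fourier_moment \<Phi> L k \<xi>) \<le> integral {-L..L} ?bound"
    unfolding fourier_moment_def
  proof (rule integral_norm_bound_integral)
    fix x assume x: "x \<in> {-L..L}"
    have "cmod (\<Phi> x) \<le> (1 + (cmod (\<Phi> x))\<^sup>2)/2"
      using zero_le_power2[of "cmod (\<Phi> x) - 1"] by (simp add: power2_diff field_simps)
    moreover have "(2*pi*\<bar>x\<bar>)^k \<le> (2*pi*L)^k"
      using x by (intro power_mono) auto
    ultimately have "(2*pi*\<bar>x\<bar>)^k * cmod (\<Phi> x) \<le> ?bound x"
      using assms(3) by (intro mult_mono) auto
    then show "norm ((-2*pi*\<i> * of_real x)^k * \<Phi> x * cis (-2*pi*x*\<xi>)) \<le> ?bound x"
      by (simp add: norm_mult norm_power)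
  qed (auto intro!: integrable_continuous_interval continuous_intros assms(1))
  also have "integral {-L..L} ?bound
      = (2*pi*L)^k / 2 * (integral {-L..L} (\<lambda>x. 1) + integral {-L..L} (\<lambda>x. (cmod (\<Phi> x))\<^sup>2))"
    by (simp add: add_divide_distrib, subst integral_add)
       (auto intro!: integrable_continuous_interval continuous_intros assms(1) simp: algebra_simps)
  also have "\<dots> = (2*pi*L)^k * ((2*L + 1)/2)"
    using assms(2,3) by simp
  finally show ?thesis .
qed

lemma smooth_real_imp_continuous_on:
  assumes "smooth_real \<Phi>"
  shows "continuous_on UNIV \<Phi>"
proof -
  have "(\<Phi> has_vector_derivative vderiv_iter (Suc 0) \<Phi> x) (at x)" for x
    using assms unfolding smooth_real_def by (metis vderiv_iter.simps(1))
  then show ?thesis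
    by (intro continuous_at_imp_continuous_on) (auto intro: has_vector_derivative_continuous)
qed

section \<open>Bounding a derivative by interpolation\<close>

lemma norm_linear_remainder_le:
  fixes g g' g'' :: "real \<Rightarrow> 'a::real_normed_vector"
  assumes g: "\<And>x. (g has_vector_derivative g' x) (at x)"
    and g': "\<And>x. (g' has_vector_derivative g'' x) (at x)"
    and bound: "\<And>x. norm (g'' x) \<le> M"
  shows "norm (g b - g a - (b - a) *\<^sub>R g' a) \<le> 3 * M * (b - a)\<^sup>2"
proof -
  have M: "0 \<le> M" using bound[of a] norm_ge_zero order_trans by blast
  have lipschitz: "norm (g' x - g' a) \<le> 3 * M * \<bar>x - a\<bar>" for x
  proof -
    have "norm (g' x - g' a - (x - a) *\<^sub>R g'' a) \<le> norm (x - a) * (2 * M)"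
    proof (rule vector_differentiable_bound_linearization[where S = UNIV])
      fix y show "norm (g'' y - g'' a) \<le> 2 * M"
        by (rule order_trans[OF norm_triangle_ineq4]) (use bound[of y] bound[of a] in linarith)
    qed (auto simp: g')
    moreover have "norm ((x - a) *\<^sub>R g'' a) \<le> \<bar>x - a\<bar> * M"
      using bound[of a] by (simp add: mult_left_mono)
    ultimately show ?thesis
      using norm_triangle_ineq[of "g' x - g' a - (x - a) *\<^sub>R g'' a" "(x - a) *\<^sub>R g'' a"]
      by (simp add: algebra_simps)
  qed
  have "norm (g b - g a - (b - a) *\<^sub>R g' a) \<le> norm (b - a) * (3 * M * \<bar>b - a\<bar>)"
  proof (rule vector_differentiable_bound_linearization[where S = "closed_segment a b"])
    fix x assume "x \<in> closed_segment a b"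
    then have "\<bar>x - a\<bar> \<le> \<bar>b - a\<bar>"
      by (auto simp: closed_segment_eq_real_ivl split: if_splits)
    then show "norm (g' x - g' a) \<le> 3 * M * \<bar>b - a\<bar>"
      using lipschitz[of x] M by (smt (verit) mult_left_mono)
  qed (auto intro: has_vector_derivative_at_within g)
  also have "\<dots> = 3 * M * \<bar>b - a\<bar>\<^sup>2"
    by (simp add: power2_eq_square)
  finally show ?thesis
    by (simp only: power2_abs)
qed

lemma norm_derivative_le_interpolation:
  fixes g g' g'' :: "real \<Rightarrow> 'a::real_normed_vector"
  assumes "\<And>x. (g has_vector_derivative g' x) (at x)"
    and "\<And>x. (g' has_vector_derivative g'' x) (at x)"
    and "\<And>x. norm (g'' x) \<le> M"
    and ga: "norm (g a) \<le> K * h\<^sup>2" and gb: "norm (g b) \<le> K * h\<^sup>2"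
    and h: "\<bar>b - a\<bar> = h" "h > 0"
  shows "norm (g' a) \<le> (2 * K + 3 * M) * h"
proof -
  have "h * norm (g' a) = norm ((b - a) *\<^sub>R g' a)"
    using h by simp
  also have "\<dots> \<le> norm (g b) + norm (g a) + norm (g b - g a - (b - a) *\<^sub>R g' a)"
    by (smt (verit) norm_triangle_ineq4 norm_triangle_ineq norm_minus_commute diff_add_cancel)
  also have "\<dots> \<le> K * h\<^sup>2 + K * h\<^sup>2 + 3 * M * h\<^sup>2"
    using ga gb norm_linear_remainder_le[OF assms(1-3), of b a] h
    by (metis add_mono power2_abs)
  also have "\<dots> = h * ((2 * K + 3 * M) * h)"
    by (simp add: power2_eq_square algebra_simps)
  finally show ?thesis
    using h by simp
qed

section \<open>The decay envelope\<close>

definition envelope :: "real \<Rightarrow> real \<Rightarrow> real \<Rightarrow> real \<Rightarrow> real \<Rightarrow> real" where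
  "envelope \<eta> s \<delta> z \<xi> =
     exp (- s * (\<delta> * \<bar>\<xi> - z\<bar>) powr (1 - \<eta>)) + exp (- s * (\<delta> * \<bar>\<xi> + z\<bar>) powr (1 - \<eta>))"

lemma envelope_pos: "envelope \<eta> s \<delta> z \<xi> > 0"
  by (simp add: envelope_def add_pos_pos)

lemma exp_stretched_decay_antimono:
  fixes \<eta> s \<delta> u v :: real
  assumes "\<eta> < 1" "s \<ge> 0" "\<delta> > 0" "\<bar>u\<bar> \<le> \<bar>v\<bar>"
  shows "exp (- s * (\<delta> * \<bar>v\<bar>) powr (1 - \<eta>)) \<le> exp (- s * (\<delta> * \<bar>u\<bar>) powr (1 - \<eta>))"
proof -
  have "(\<delta> * \<bar>u\<bar>) powr (1 - \<eta>) \<le> (\<delta> * \<bar>v\<bar>) powr (1 - \<eta>)"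
    using powr_mono2[of "1 - \<eta>" "\<delta> * \<bar>u\<bar>" "\<delta> * \<bar>v\<bar>"] assms by (simp add: mult_left_mono)
  then show ?thesis
    using assms by (simp add: mult_left_mono)
qed

lemma envelope_le_farther:
  assumes "\<eta> < 1" "s \<ge> 0" "\<delta> > 0" "z \<ge> 0" "(z < \<xi> \<and> \<xi> \<le> b) \<or> (b \<le> \<xi> \<and> \<xi> < -z)"
  shows "envelope \<eta> s \<delta> z b \<le> envelope \<eta> s \<delta> z \<xi>"
  unfolding envelope_def
  by (intro add_mono exp_stretched_decay_antimono) (use assms in auto)

lemma sqrt_envelope_le: "sqrt (envelope \<eta> s \<delta> z \<xi>) \<le> envelope \<eta> (s/2) \<delta> z \<xi>"
proof -
  have sqrt_exp: "sqrt (exp u) = exp (u/2)" for u :: real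
  proof -
    have "exp u = (exp (u/2))\<^sup>2" by (simp add: power2_eq_square exp_add[symmetric])
    then show ?thesis by simp
  qed
  have "sqrt (envelope \<eta> s \<delta> z \<xi>) \<le> sqrt (exp (- s * (\<delta> * \<bar>\<xi> - z\<bar>) powr (1 - \<eta>)))
      + sqrt (exp (- s * (\<delta> * \<bar>\<xi> + z\<bar>) powr (1 - \<eta>)))"
    unfolding envelope_def by (rule sqrt_add_le_add_sqrt) auto
  then show ?thesis
    by (simp add: sqrt_exp envelope_def)
qed

section \<open>Induction on the order of the derivative\<close>

definition xi0 :: "real \<Rightarrow> nat \<Rightarrow> real" where
  "xi0 \<delta> \<kappa> = (2 * real \<kappa> + 1) / (4 * \<delta>)"

definition admissible ::
    "real \<Rightarrow> real \<Rightarrow> real \<Rightarrow> real \<Rightarrow> real \<Rightarrow> nat \<Rightarrow> (real \<Rightarrow> complex) \<Rightarrow> bool" where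
  "admissible \<eta> A a D \<delta> \<kappa> \<Phi> \<longleftrightarrow> D \<ge> 2 \<and> 0 < \<delta> \<and> \<delta> \<le> D \<and> smooth_real \<Phi> \<and>
     (\<forall>x. \<bar>x\<bar> > D / 2 \<longrightarrow> \<Phi> x = 0) \<and> (LINT x|lborel. (cmod (\<Phi> x))\<^sup>2) = 1 \<and>
     (\<forall>\<xi>. cmod (fourier \<Phi> \<xi>) \<le> sqrt \<delta> * A * envelope \<eta> a \<delta> (xi0 \<delta> \<kappa>) \<xi>)"

definition moment_decay :: "real \<Rightarrow> real \<Rightarrow> real \<Rightarrow> nat \<Rightarrow> real \<Rightarrow> real \<Rightarrow> real \<Rightarrow> bool" where
  "moment_decay \<eta> A a n C d s \<longleftrightarrow> (\<forall>D \<delta> \<kappa> \<Phi> \<xi>. admissible \<eta> A a D \<delta> \<kappa> \<Phi> \<longrightarrow> \<bar>\<xi>\<bar> > xi0 \<delta> \<kappa> \<longrightarrow>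
     norm (fourier_moment \<Phi> (D/2) n \<xi>) \<le> C * D powr d * envelope \<eta> s \<delta> (xi0 \<delta> \<kappa>) \<xi>)"

lemma admissible_continuous_on:
  "admissible \<eta> A a D \<delta> \<kappa> \<Phi> \<Longrightarrow> continuous_on UNIV \<Phi>"
  unfolding admissible_def by (blast intro: smooth_real_imp_continuous_on)

lemma admissible_fourier_eq:
  "admissible \<eta> A a D \<delta> \<kappa> \<Phi> \<Longrightarrow> fourier \<Phi> = fourier_moment \<Phi> (D/2) 0"
  by (intro fourier_eq_fourier_moment admissible_continuous_on) (auto simp: admissible_def)

lemma admissible_norm_fourier_moment_le:
  assumes "admissible \<eta> A a D \<delta> \<kappa> \<Phi>"
  shows "norm (fourier_moment \<Phi> (D/2) k \<xi>) \<le> 4^k * D powr (real k + 1)"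
proof -
  have D: "D \<ge> 2" and supp: "\<And>x. \<bar>x\<bar> > D/2 \<Longrightarrow> \<Phi> x = 0"
    and L2: "(LINT x|lborel. (cmod (\<Phi> x))\<^sup>2) = 1"
    using assms by (auto simp: admissible_def)
  have cont: "continuous_on UNIV \<Phi>"
    using assms by (rule admissible_continuous_on)
  have "continuous_on UNIV (\<lambda>x. (cmod (\<Phi> x))\<^sup>2)"
    using cont by (intro continuous_intros)
  then have "integral {-D/2..D/2} (\<lambda>x. (cmod (\<Phi> x))\<^sup>2) = 1"
    using integral_lborel_eq_integral_interval[of "\<lambda>x. (cmod (\<Phi> x))\<^sup>2" "D/2"] supp L2
    by auto
  then have "norm (fourier_moment \<Phi> (D/2) k \<xi>) \<le> (2*pi*(D/2))^k * ((2*(D/2) + 1)/2)"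
    using D by (intro norm_fourier_moment_le continuous_on_subset[OF cont]) auto
  also have "\<dots> \<le> (4*D)^k * D"
  proof (rule mult_mono)
    show "(2*pi*(D/2))^k \<le> (4*D)^k"
      using D pi_less_4 by (intro power_mono) auto
  qed (use D in auto)
  also have "\<dots> = 4^k * D powr (real k + 1)"
    using D by (simp add: powr_add powr_realpow power_mult_distrib)
  finally show ?thesis .
qed

lemma moment_decay_0:
  assumes "A > 0"
  shows "moment_decay \<eta> A a 0 A (1/2) a"
  unfolding moment_decay_def
proof (intro allI impI)
  fix D \<delta> \<kappa> \<Phi> \<xi>
  assume adm: "admissible \<eta> A a D \<delta> \<kappa> \<Phi>"
  then have "norm (fourier_moment \<Phi> (D/2) 0 \<xi>) \<le> sqrt \<delta> * A * envelope \<eta> a \<delta> (xi0 \<delta> \<kappa>) \<xi>"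
    using admissible_fourier_eq[OF adm] by (simp add: admissible_def)
  also have "\<dots> \<le> A * D powr (1/2) * envelope \<eta> a \<delta> (xi0 \<delta> \<kappa>) \<xi>"
    using adm assms envelope_pos[of \<eta> a \<delta> "xi0 \<delta> \<kappa>" \<xi>]
    by (intro mult_right_mono) (auto simp: admissible_def powr_half_sqrt)
  finally show "norm (fourier_moment \<Phi> (D/2) 0 \<xi>) \<le> A * D powr (1/2) * envelope \<eta> a \<delta> (xi0 \<delta> \<kappa>) \<xi>" .
qed

lemma moment_decay_Suc:
  assumes "\<eta> < 1" "C > 0" "s > 0" "moment_decay \<eta> A a n C d s"
  shows "moment_decay \<eta> A a (Suc n) (2 * C + 3 * 4^(n+2)) (max d (real n + 3)) (s/2)"
  unfolding moment_decay_def
proof (intro allI impI)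
  fix D \<delta> \<kappa> \<Phi> \<xi>
  assume adm: "admissible \<eta> A a D \<delta> \<kappa> \<Phi>" and \<xi>: "\<bar>\<xi>\<bar> > xi0 \<delta> \<kappa>"
  let ?F = "fourier_moment \<Phi> (D/2)" and ?E = "envelope \<eta> s \<delta> (xi0 \<delta> \<kappa>)"
  have D: "D \<ge> 2" and \<delta>: "\<delta> > 0" using adm by (auto simp: admissible_def)
  have cont: "continuous_on UNIV \<Phi>" using adm by (rule admissible_continuous_on)
  have z: "xi0 \<delta> \<kappa> \<ge> 0" using \<delta> by (simp add: xi0_def)
  define M where "M = 4^Suc (Suc n) * D powr (real (Suc (Suc n)) + 1)"
  define h where "h = sqrt (?E \<xi>)"
  have h: "h > 0" "h\<^sup>2 = ?E \<xi>"
    using envelope_pos[of \<eta> s \<delta> "xi0 \<delta> \<kappa>" \<xi>] by (auto simp: h_def)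
  define b where "b = (if \<xi> > 0 then \<xi> + h else \<xi> - h)"
  have b: "\<bar>b - \<xi>\<bar> = h" "\<bar>b\<bar> > xi0 \<delta> \<kappa>" "?E b \<le> ?E \<xi>"
    using \<xi> h z \<delta> assms by (auto simp: b_def intro!: envelope_le_farther)
  have K: "C * D powr d > 0" using assms D by simp
  have "norm (?F (Suc n) \<xi>) \<le> (2 * (C * D powr d) + 3 * M) * h"
  proof (rule norm_derivative_le_interpolation)
    show "norm (?F n \<xi>) \<le> C * D powr d * h\<^sup>2"
      using assms(4) adm \<xi> h by (simp add: moment_decay_def)
    show "norm (?F n b) \<le> C * D powr d * h\<^sup>2"
      using assms(4) adm b h K by (smt (verit) moment_decay_def mult_left_mono)
    show "norm (?F (Suc (Suc n)) x) \<le> M" for x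
      unfolding M_def by (rule admissible_norm_fourier_moment_le[OF adm])
  qed (use fourier_moment_has_vector_derivative[OF cont] b h in auto)
  also have "\<dots> \<le> (2 * (C * D powr d) + 3 * M) * envelope \<eta> (s/2) \<delta> (xi0 \<delta> \<kappa>) \<xi>"
    unfolding h_def using K by (intro mult_left_mono sqrt_envelope_le) (auto simp: M_def)
  also have "\<dots> \<le> (2 * C + 3 * 4^(n+2)) * D powr (max d (real n + 3))
      * envelope \<eta> (s/2) \<delta> (xi0 \<delta> \<kappa>) \<xi>"
  proof (rule mult_right_mono)
    have "D powr d \<le> D powr (max d (real n + 3))"
      "D powr (real (Suc (Suc n)) + 1) \<le> D powr (max d (real n + 3))"
      using D by (auto intro!: powr_mono)
    then show "2 * (C * D powr d) + 3 * M \<le> (2 * C + 3 * 4^(n+2)) * D powr (max d (real n + 3))"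
      using assms by (simp add: M_def algebra_simps add_mono mult_left_mono)
  qed (rule less_imp_le[OF envelope_pos])
  finally show "norm (?F (Suc n) \<xi>) \<le> (2 * C + 3 * 4^(n+2)) * D powr (max d (real n + 3))
      * envelope \<eta> (s/2) \<delta> (xi0 \<delta> \<kappa>) \<xi>" .
qed

lemma ex_moment_decay:
  assumes "\<eta> < 1" "A > 0" "a > 0"
  shows "\<exists>C d s. C > 0 \<and> d > 0 \<and> s > 0 \<and> moment_decay \<eta> A a n C d s"
proof (induction n)
  case 0
  show ?case
    using moment_decay_0[OF assms(2)] assms by (intro exI[of _ A] exI[of _ "1/2"] exI[of _ a]) auto
next
  case (Suc n)
  then obtain C d s where "C > 0" "d > 0" "s > 0" "moment_decay \<eta> A a n C d s"
    by blast
  then show ?case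
    using moment_decay_Suc[OF assms(1)]
    by (intro exI[of _ "2 * C + 3 * 4^(n+2)"] exI[of _ "max d (real n + 3)"] exI[of _ "s/2"])
       (auto intro: add_pos_pos)
qed

theorem corollary1:
  fixes \<eta> A a :: real
  assumes "0 < \<eta>" "\<eta> < 1" "A > 0" "a > 0"
  shows "\<forall>n::nat. \<exists>C d s :: real. C > 0 \<and> d > 0 \<and> s > 0 \<and>
    (\<forall>(D::real) (\<delta>::real) (\<kappa>::nat) (\<Phi>::real \<Rightarrow> complex).
       D \<ge> 2 \<longrightarrow> 0 < \<delta> \<longrightarrow> \<delta> \<le> D \<longrightarrow>
       smooth_real \<Phi> \<longrightarrow>
       (\<forall>x. \<bar>x\<bar> > D / 2 \<longrightarrow> \<Phi> x = 0) \<longrightarrow>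
       (LINT x|lborel. (cmod (\<Phi> x))\<^sup>2) = 1 \<longrightarrow>
       (let \<xi>\<^sub>0 = (2 * real \<kappa> + 1) / (4 * \<delta>) in
         (\<forall>\<xi>. cmod (fourier \<Phi> \<xi>) \<le> sqrt \<delta> * A *
              (exp (- a * (\<delta> * \<bar>\<xi> - \<xi>\<^sub>0\<bar>) powr (1 - \<eta>))
               + exp (- a * (\<delta> * \<bar>\<xi> + \<xi>\<^sub>0\<bar>) powr (1 - \<eta>)))) \<longrightarrow>
         (\<forall>\<xi>. \<bar>\<xi>\<bar> > \<xi>\<^sub>0 \<longrightarrow>
            cmod (vderiv_iter n (fourier \<Phi>) \<xi>) \<le> C * D powr d *
              (exp (- s * (\<delta> * \<bar>\<xi> - \<xi>\<^sub>0\<bar>) powr (1 - \<eta>))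
               + exp (- s * (\<delta> * \<bar>\<xi> + \<xi>\<^sub>0\<bar>) powr (1 - \<eta>))))))"
proof -
  obtain C d s :: "nat \<Rightarrow> real" where pos: "\<And>n. C n > 0 \<and> d n > 0 \<and> s n > 0"
    and decay: "\<And>n. moment_decay \<eta> A a n (C n) (d n) (s n)"
    using ex_moment_decay[OF assms(2-4)] by metis
  have "cmod (vderiv_iter n (fourier \<Phi>) \<xi>) \<le> C n * D powr d n * envelope \<eta> (s n) \<delta> (xi0 \<delta> \<kappa>) \<xi>"
    if "admissible \<eta> A a D \<delta> \<kappa> \<Phi>" "\<bar>\<xi>\<bar> > xi0 \<delta> \<kappa>" for n D \<delta> \<kappa> \<Phi> \<xi>
    using decay[of n] that
    by (simp add: moment_decay_def admissible_fourier_eq vderiv_iter_fourier_moment admissible_continuous_on)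
  then show ?thesis
    unfolding Let_def
    apply (intro allI)
    subgoal for n
      using pos[of n] unfolding admissible_def envelope_def xi0_def
      by (intro exI[of _ "C n"] exI[of _ "d n"] exI[of _ "s n"]) auto
    done
qed

end
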